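(* For every positive integer $n$, the Chinese monoid $\mathsf{Ch}_n$ has a faithful (i.e. injective) tropical linear representation $\rho:\mathsf{Ch}_n\to\mathcal U_{n(n+1)}(\mathbb T)$ by upper triangular tropical matrices; more precisely, the image consists of block-diagonal triangular matrices whose diagonal blocks are $2\times 2$ upper triangular tropical matrices.
   Context: The Chinese monoid of rank $n$ is the monoid $\mathsf{Ch}_n=\langle a_1,\dots,a_n\rangle$ presented by the relations $a_ja_ka_i=a_ka_ja_i=a_ka_ia_j$ for all $1\le i\le j\le k\le n$. The tropical (max-plus) semiring is $\mathbb T=\mathbb R\cup\{-\infty\}$ with addition $a\vee b=\max\{a,b\}$ and multiplication $a+b$ (ordinary sum). $\mathcal M_N(\mathbb T)$ denotes the monoid of $N\times N$ matrices over $\mathbb T$ with the induced matrix product $(AB)_{ij}=\max_k (A_{ik}+B_{kj})$, and $\mathcal U_N(\mathbb T)$ the submonoid of upper triangular matrices (entries below the diagonal equal to $-\infty$). A tropical linear representation of a monoid $\mathcal S$ is a monoid homomorphism $\rho:\mathcal S\to\mathcal M_N(\mathbb T)$, i.e. $\rho(xy)=\rho(x)\rho(y)$ for all $x,y$; it is faithful if injective. *)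

theory Defs
  imports Main "HOL.Real"
begin

datatype trop = NegInf | Fin real

fun tadd :: "trop \<Rightarrow> trop \<Rightarrow> trop" where
  "tadd NegInf b = b"
| "tadd a NegInf = a"
| "tadd (Fin x) (Fin y) = Fin (max x y)"

fun tmul :: "trop \<Rightarrow> trop \<Rightarrow> trop" where
  "tmul NegInf b = NegInf"
| "tmul a NegInf = NegInf"
| "tmul (Fin x) (Fin y) = Fin (x + y)"

definition tsum :: "(nat \<Rightarrow> trop) \<Rightarrow> nat \<Rightarrow> trop" where
  "tsum f N = foldr (\<lambda>k acc. tadd (f k) acc) [0..<N] NegInf"

type_synonym tmat = "nat \<Rightarrow> nat \<Rightarrow> trop"

definition tmats :: "nat \<Rightarrow> tmat set" where
  "tmats N = {A. \<forall>i j. (N \<le> i \<or> N \<le> j) \<longrightarrow> A i j = NegInf}"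

definition tmat_mult :: "nat \<Rightarrow> tmat \<Rightarrow> tmat \<Rightarrow> tmat" where
  "tmat_mult N A B = (\<lambda>i j. tsum (\<lambda>k. tmul (A i k) (B k j)) N)"

definition tmat_one :: "nat \<Rightarrow> tmat" where
  "tmat_one N = (\<lambda>i j. if i = j \<and> i < N then Fin 0 else NegInf)"

definition upper_tri :: "nat \<Rightarrow> tmat \<Rightarrow> bool" where
  "upper_tri N A \<longleftrightarrow> A \<in> tmats N \<and> (\<forall>i j. j < i \<longrightarrow> A i j = NegInf)"

text \<open>Block-diagonal with 2x2 upper triangular diagonal blocks on index pairs {2m, 2m+1}:
  the only possibly finite entries are diagonal ones and (2m, 2m+1).\<close>
definition block2_upper :: "nat \<Rightarrow> tmat \<Rightarrow> bool" where
  "block2_upper N A \<longleftrightarrow> upper_tri N A \<and>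
     (\<forall>i j. A i j \<noteq> NegInf \<longrightarrow> (i = j \<or> (even i \<and> j = i + 1)))"

section \<open>The Chinese monoid Ch_n as words over {1..n} modulo its congruence\<close>

definition ch_words :: "nat \<Rightarrow> nat list set" where
  "ch_words n = {w. set w \<subseteq> {1..n}}"

definition ch_step :: "nat \<Rightarrow> (nat list \<times> nat list) set" where
  "ch_step n = {(x @ l @ y, x @ r @ y) | x y l r. set x \<subseteq> {1..n} \<and> set y \<subseteq> {1..n} \<and>
     (\<exists>i j k. 1 \<le> i \<and> i \<le> j \<and> j \<le> k \<and> k \<le> n \<and>
        ((l = [j,k,i] \<and> r = [k,j,i]) \<or> (l = [k,j,i] \<and> r = [k,i,j])))}"

definition ch_eq :: "nat \<Rightarrow> nat list \<Rightarrow> nat list \<Rightarrow> bool" where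
  "ch_eq n u v \<longleftrightarrow> (u, v) \<in> (ch_step n \<union> (ch_step n)\<inverse>)\<^sup>*"

end

theory Submission
  imports Defs "HOL-Library.Multiset"
begin

(* For 1 <= j <= k <= n send a word w to the 2x2 upper triangular tropical matrix with diagonal
   (a, b) and corner c, where a counts the letters <= j, b the letters >= k, and c is the length of
   a longest subsequence of w formed by letters <= j followed by letters >= k.  This is multiplicative
   in w and invariant under the defining relations, so the block-diagonal sum over all n(n+1)/2
   pairs (j, k) is a representation of Ch_n by n(n+1) x n(n+1) matrices.

   For faithfulness, every word is congruent to a normal form made of rows
   t s_1 t s_2 ... t s_r t^m with s_1 <= ... <= s_r < t, one row for each t = 1, ..., n in
   increasing order.  On a normal form, a + b - c counts the letters <= j among the s_i of the rows
   t >= k; differencing in j and k recovers every row, and the numbers a for j = k recover the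
   exponents m. *)

section \<open>The Chinese congruence\<close>

lemma ch_eq_refl: "ch_eq n u u"
  by (simp add: ch_eq_def)

lemma ch_eq_sym: "ch_eq n u v \<Longrightarrow> ch_eq n v u"
  unfolding ch_eq_def by (metis converse_Un converse_converse rtrancl_converseI sup_commute)

lemma ch_eq_trans [trans]: "ch_eq n u v \<Longrightarrow> ch_eq n v w \<Longrightarrow> ch_eq n u w"
  unfolding ch_eq_def by (meson rtrancl_trans)

lemma ch_step_append_context:
  assumes "(u, v) \<in> ch_step n" "set p \<subseteq> {1..n}" "set q \<subseteq> {1..n}"
  shows "(p @ u @ q, p @ v @ q) \<in> ch_step n"
proof -
  from assms(1) obtain x y l r where "u = x @ l @ y" "v = x @ r @ y"
    and "set x \<subseteq> {1..n}" "set y \<subseteq> {1..n}"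
    and rel: "\<exists>i j k. 1 \<le> i \<and> i \<le> j \<and> j \<le> k \<and> k \<le> n \<and>
        ((l = [j,k,i] \<and> r = [k,j,i]) \<or> (l = [k,j,i] \<and> r = [k,i,j]))"
    unfolding ch_step_def by blast
  then have "p @ u @ q = (p @ x) @ l @ (y @ q)" "p @ v @ q = (p @ x) @ r @ (y @ q)"
    and "set (p @ x) \<subseteq> {1..n}" "set (y @ q) \<subseteq> {1..n}"
    using assms(2,3) by auto
  with rel show ?thesis unfolding ch_step_def by blast
qed

lemma ch_eq_append_context:
  assumes "ch_eq n u v" "set p \<subseteq> {1..n}" "set q \<subseteq> {1..n}"
  shows "ch_eq n (p @ u @ q) (p @ v @ q)"
  using assms(1) unfolding ch_eq_def
proof (induction rule: rtrancl_induct)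
  case (step y z)
  then have "(p @ y @ q, p @ z @ q) \<in> ch_step n \<union> (ch_step n)\<inverse>"
    using ch_step_append_context[OF _ assms(2,3)] by auto
  with step.IH show ?case by (rule rtrancl_into_rtrancl)
qed simp

lemma ch_eq_append_left: "ch_eq n u v \<Longrightarrow> set p \<subseteq> {1..n} \<Longrightarrow> ch_eq n (p @ u) (p @ v)"
  using ch_eq_append_context[of n u v p "[]"] by simp

lemma ch_eq_append_right: "ch_eq n u v \<Longrightarrow> set q \<subseteq> {1..n} \<Longrightarrow> ch_eq n (u @ q) (v @ q)"
  using ch_eq_append_context[of n u v "[]" q] by simp

lemma ch_eq_jki_kji: "1 \<le> i \<Longrightarrow> i \<le> j \<Longrightarrow> j \<le> k \<Longrightarrow> k \<le> n \<Longrightarrow> ch_eq n [j,k,i] [k,j,i]"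
  unfolding ch_eq_def ch_step_def
  by (rule r_into_rtrancl, rule UnI1, simp, rule exI[of _ "[]"], rule exI[of _ "[]"], auto)

lemma ch_eq_kji_kij: "1 \<le> i \<Longrightarrow> i \<le> j \<Longrightarrow> j \<le> k \<Longrightarrow> k \<le> n \<Longrightarrow> ch_eq n [k,j,i] [k,i,j]"
  unfolding ch_eq_def ch_step_def
  by (rule r_into_rtrancl, rule UnI1, simp, rule exI[of _ "[]"], rule exI[of _ "[]"], auto)

lemma ch_eq_tsy_yts: "1 \<le> s \<Longrightarrow> s \<le> y \<Longrightarrow> y \<le> t \<Longrightarrow> t \<le> n \<Longrightarrow> ch_eq n [t,s,y] [y,t,s]"
  by (meson ch_eq_sym ch_eq_trans ch_eq_jki_kji ch_eq_kji_kij)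

lemma ch_eq_tty_tyt: "1 \<le> y \<Longrightarrow> y \<le> t \<Longrightarrow> t \<le> n \<Longrightarrow> ch_eq n [t,t,y] [t,y,t]"
  using ch_eq_kji_kij[of y t t n] by simp

lemma ch_eq_tsty_tyts:
  assumes "1 \<le> y" "y \<le> s" "s \<le> t" "t \<le> n"
  shows "ch_eq n [t,s,t,y] [t,y,t,s]"
proof -
  have "ch_eq n ([t] @ [s,t,y]) ([t] @ [t,s,y])"
    by (rule ch_eq_append_left[OF ch_eq_jki_kji]) (use assms in auto)
  moreover have "ch_eq n ([t] @ [t,s,y]) ([t] @ [t,y,s])"
    by (rule ch_eq_append_left[OF ch_eq_kji_kij]) (use assms in auto)
  moreover have "ch_eq n ([t,t,y] @ [s]) ([t,y,t] @ [s])"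
    by (rule ch_eq_append_right[OF ch_eq_tty_tyt]) (use assms in auto)
  ultimately show ?thesis by (auto intro: ch_eq_trans)
qed

definition pairs :: "nat \<Rightarrow> nat list \<Rightarrow> nat list" where
  "pairs t L = concat (map (\<lambda>s. [t, s]) L)"

lemma pairs_simps [simp]:
  "pairs t [] = []" "pairs t (s # L) = t # s # pairs t L" "pairs t (A @ B) = pairs t A @ pairs t B"
  by (simp_all add: pairs_def)

lemma set_pairs [simp]: "set (pairs t L) = (if L = [] then {} else insert t (set L))"
  by (induction L) auto

lemma ch_eq_pairs_commute_letter:
  assumes "\<forall>s\<in>set L. 1 \<le> s \<and> s \<le> y" "y \<le> t" "t \<le> n"
  shows "ch_eq n (pairs t L @ [y]) (y # pairs t L)"
  using assms(1)
proof (induction L)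
  case (Cons s L)
  have "set (pairs t L) \<subseteq> {1..n}"
    using Cons.prems assms by auto
  with Cons.prems assms have "ch_eq n ([t,s,y] @ pairs t L) ([y,t,s] @ pairs t L)"
    by (intro ch_eq_append_right ch_eq_tsy_yts) auto
  moreover have "ch_eq n ([t,s] @ pairs t L @ [y]) ([t,s] @ y # pairs t L)"
    by (rule ch_eq_append_left) (use Cons assms in auto)
  ultimately show ?case by (auto intro: ch_eq_trans)
qed (simp add: ch_eq_refl)

lemma ch_eq_pairs_commute_pair:
  assumes "\<forall>s\<in>set L. y \<le> s \<and> s \<le> t" "1 \<le> y" "t \<le> n"
  shows "ch_eq n (pairs t L @ [t,y]) (t # y # pairs t L)"
  using assms(1)
proof (induction L)
  case (Cons s L)
  have "set (pairs t L) \<subseteq> {1..n}"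
    using Cons.prems assms by auto
  with Cons.prems assms have "ch_eq n ([t,s,t,y] @ pairs t L) ([t,y,t,s] @ pairs t L)"
    by (intro ch_eq_append_right ch_eq_tsty_tyts) auto
  moreover have "ch_eq n ([t,s] @ pairs t L @ [t,y]) ([t,s] @ t # y # pairs t L)"
    by (rule ch_eq_append_left) (use Cons assms in auto)
  ultimately show ?case by (auto intro: ch_eq_trans)
qed (simp add: ch_eq_refl)

lemma ch_eq_replicate_commute_pair:
  assumes "1 \<le> y" "y \<le> t" "t \<le> n"
  shows "ch_eq n (replicate m t @ [t,y]) (t # y # replicate m t)"
proof (induction m)
  case (Suc m)
  have "ch_eq n ([t] @ replicate m t @ [t,y]) ([t] @ t # y # replicate m t)"
    by (rule ch_eq_append_left[OF Suc]) (use assms in auto)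
  moreover have "ch_eq n ([t,t,y] @ replicate m t) ([t,y,t] @ replicate m t)"
    by (rule ch_eq_append_right[OF ch_eq_tty_tyt]) (use assms in auto)
  ultimately show ?case by (auto intro: ch_eq_trans)
qed (simp add: ch_eq_refl)

section \<open>Normal forms\<close>

definition row :: "nat \<Rightarrow> nat list \<Rightarrow> nat \<Rightarrow> nat list" where
  "row t L m = pairs t L @ replicate m t"

definition nf_word :: "nat \<Rightarrow> (nat \<Rightarrow> nat list) \<Rightarrow> (nat \<Rightarrow> nat) \<Rightarrow> nat list" where
  "nf_word t Ls m = concat (map (\<lambda>r. row r (Ls r) (m r)) [1..<Suc t])"

definition nf_data :: "(nat \<Rightarrow> nat list) \<Rightarrow> bool" where
  "nf_data Ls \<longleftrightarrow> (\<forall>r. sorted (Ls r) \<and> set (Ls r) \<subseteq> {1..<r})"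

lemma set_row: "set L \<subseteq> {1..<t} \<Longrightarrow> 1 \<le> t \<Longrightarrow> t \<le> n \<Longrightarrow> set (row t L m) \<subseteq> {1..n}"
  unfolding row_def by auto

lemma nf_word_0 [simp]: "nf_word 0 Ls m = []"
  by (simp add: nf_word_def)

lemma nf_word_Suc: "nf_word (Suc t) Ls m = nf_word t Ls m @ row (Suc t) (Ls (Suc t)) (m (Suc t))"
  by (simp add: nf_word_def)

lemma nf_word_cong:
  "(\<And>r. 1 \<le> r \<Longrightarrow> r \<le> t \<Longrightarrow> Ls r = Ls' r \<and> m r = m' r) \<Longrightarrow>
    nf_word t Ls m = nf_word t Ls' m'"
  unfolding nf_word_def by (intro arg_cong[where f = concat] map_cong) auto

lemma set_nf_word: "nf_data Ls \<Longrightarrow> set (nf_word t Ls m) \<subseteq> {1..t}"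
proof (induction t)
  case (Suc t)
  have "set (row (Suc t) (Ls (Suc t)) (m (Suc t))) \<subseteq> {1..Suc t}"
    using Suc.prems by (intro set_row) (auto simp: nf_data_def)
  with Suc show ?case by (auto simp: nf_word_Suc)
qed simp

lemma sorted_insort_split:
  fixes L :: "nat list"
  assumes "sorted L"
  obtains A B where "L = A @ B" "insort y L = A @ y # B" "\<forall>a\<in>set A. a < y" "\<forall>b\<in>set B. y \<le> b"
  using assms
proof (induction L arbitrary: thesis)
  case Nil
  then show ?case by simp
next
  case (Cons s L)
  show ?case
  proof (cases "y \<le> s")
    case True
    with Cons.prems show ?thesis by (intro Cons.prems(1)[of "[]" "s # L"]) auto
  next
    case False
    from Cons.IH obtain A B where "L = A @ B" "insort y L = A @ y # B"
      "\<forall>a\<in>set A. a < y" "\<forall>b\<in>set B. y \<le> b" using Cons.prems(2) by auto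
    with False show ?thesis by (intro Cons.prems(1)[of "s # A" B]) auto
  qed
qed

lemma row_snoc_absorb:
  assumes "sorted L" "set L \<subseteq> {1..<t}" "1 \<le> y" "y \<le> t" "t \<le> n"
  shows "ch_eq n (row t L (Suc m) @ [y]) (row t (insort y L) m)"
proof -
  obtain A B where AB: "L = A @ B" "insort y L = A @ y # B" "\<forall>a\<in>set A. a < y" "\<forall>b\<in>set B. y \<le> b"
    using sorted_insort_split[OF assms(1)] .
  have A: "set (pairs t A) \<subseteq> {1..n}" and B: "set (pairs t B) \<subseteq> {1..n}"
    using assms AB(1) by auto
  have "row t L (Suc m) @ [y] = (pairs t A @ pairs t B) @ replicate m t @ [t, y]"
    unfolding row_def AB(1) by (simp flip: replicate_append_same)
  also have "ch_eq n \<dots> ((pairs t A @ pairs t B) @ t # y # replicate m t)"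
    using A B assms by (intro ch_eq_append_left ch_eq_replicate_commute_pair) auto
  also have "\<dots> = pairs t A @ (pairs t B @ [t, y]) @ replicate m t"
    by simp
  also have "ch_eq n \<dots> (pairs t A @ (t # y # pairs t B) @ replicate m t)"
    using A assms AB by (intro ch_eq_append_context ch_eq_pairs_commute_pair) auto
  also have "\<dots> = row t (insort y L) m"
    unfolding row_def AB(2) by simp
  finally show ?thesis .
qed

lemma row_snoc_pass:
  assumes "\<forall>s\<in>set L. s \<le> y" "set L \<subseteq> {1..<t}" "y \<le> t" "t \<le> n"
  shows "ch_eq n (row t L 0 @ [y]) (y # row t L 0)"
  using assms by (auto simp: row_def intro!: ch_eq_pairs_commute_letter)

lemma row_snoc_bump:
  assumes "sorted (L @ [s])" "set (L @ [s]) \<subseteq> {1..<t}" "1 \<le> y" "y \<le> s" "t \<le> n"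
  shows "ch_eq n (row t (L @ [s]) 0 @ [y]) (s # row t (insort y L) 0)"
proof -
  have L: "sorted L" "\<forall>a\<in>set L. a \<le> s"
    using assms(1) by (auto simp: sorted_append)
  obtain A B where AB: "L = A @ B" "insort y L = A @ y # B" "\<forall>a\<in>set A. a < y" "\<forall>b\<in>set B. y \<le> b"
    using sorted_insort_split[OF L(1)] .
  have A: "set (pairs t A) \<subseteq> {1..n}" and B: "set (pairs t B) \<subseteq> {1..n}"
    using assms AB(1) by auto
  have "row t (L @ [s]) 0 @ [y] = (pairs t A @ pairs t B) @ [t, s, y] @ []"
    unfolding row_def AB(1) by simp
  also have "ch_eq n \<dots> ((pairs t A @ pairs t B) @ [t, y, s] @ [])"
    using A B assms by (intro ch_eq_append_context ch_eq_kji_kij) auto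
  also have "\<dots> = pairs t (A @ B @ [y]) @ [s]"
    by simp
  also have "ch_eq n \<dots> (s # pairs t (A @ B @ [y]))"
    using assms L AB(1) by (intro ch_eq_pairs_commute_letter) auto
  also have "\<dots> = (s # pairs t A) @ (pairs t B @ [t, y]) @ []"
    by simp
  also have "ch_eq n \<dots> ((s # pairs t A) @ (t # y # pairs t B) @ [])"
    using A assms AB by (intro ch_eq_append_context ch_eq_pairs_commute_pair) auto
  also have "\<dots> = s # row t (insort y L) 0"
    unfolding row_def AB(2) by simp
  finally show ?thesis .
qed

(* Insertion of a letter into a row: it is either absorbed, or exactly one letter smaller than t
   is pushed out to the left, to be inserted into the earlier rows. *)
lemma row_snoc:
  assumes "sorted L" "set L \<subseteq> {1..<t}" "1 \<le> y" "y \<le> t" "t \<le> n"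
  shows "\<exists>zs L' m'. set zs \<subseteq> {1..<t} \<and> sorted L' \<and> set L' \<subseteq> {1..<t} \<and>
    ch_eq n (row t L m @ [y]) (zs @ row t L' m')"
proof -
  have insort: "sorted (insort y L')" "set (insort y L') \<subseteq> {1..<t}"
    if "sorted L'" "set L' \<subseteq> {1..<t}" "y < t" for L'
    using that assms(3) by (auto simp: sorted_insort set_insort_key)
  consider "y = t" | "y < t" "m > 0" | "y < t" "m = 0" "\<forall>s\<in>set L. s \<le> y"
    | L0 s where "y < t" "m = 0" "L = L0 @ [s]" "y < s"
    using assms(1,4) by (cases L rule: rev_cases) (fastforce simp: sorted_append)+
  then show ?thesis
  proof cases
    case 1
    then have "row t L m @ [y] = [] @ row t L (Suc m)"
      by (simp add: row_def replicate_append_same)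
    with assms show ?thesis by (intro exI[of _ "[]"] exI[of _ L] exI[of _ "Suc m"]) (simp add: ch_eq_refl)
  next
    case 2
    then obtain m' where "m = Suc m'" using not0_implies_Suc by blast
    with 2 assms insort[of L] row_snoc_absorb[of L t y n m'] show ?thesis
      by (intro exI[of _ "[]"] exI[of _ "insort y L"] exI[of _ m']) simp
  next
    case 3
    with assms row_snoc_pass[of L y t n] show ?thesis
      by (intro exI[of _ "[y]"] exI[of _ L] exI[of _ 0]) simp
  next
    case 4
    then have "sorted L0" "set L0 \<subseteq> {1..<t}" "s \<in> {1..<t}"
      using assms(1,2) by (auto simp: sorted_append)
    with 4 assms insort[of L0] row_snoc_bump[of L0 s t y n] show ?thesis
      by (intro exI[of _ "[s]"] exI[of _ "insort y L0"] exI[of _ 0]) simp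
  qed
qed

lemma row_append:
  assumes "sorted L" "set L \<subseteq> {1..<t}" "set w \<subseteq> {1..t}" "t \<le> n"
  shows "\<exists>zs L' m'. set zs \<subseteq> {1..<t} \<and> sorted L' \<and> set L' \<subseteq> {1..<t} \<and>
    ch_eq n (row t L m @ w) (zs @ row t L' m')"
  using assms(1-3)
proof (induction w arbitrary: L m)
  case Nil
  then show ?case by (intro exI[of _ "[]"] exI[of _ L] exI[of _ m]) (simp add: ch_eq_refl)
next
  case (Cons y w)
  obtain zs1 L1 m1 where 1: "set zs1 \<subseteq> {1..<t}" "sorted L1" "set L1 \<subseteq> {1..<t}"
    "ch_eq n (row t L m @ [y]) (zs1 @ row t L1 m1)"
    using row_snoc[of L t y n m] Cons.prems assms(4) by auto
  obtain zs2 L2 m2 where 2: "set zs2 \<subseteq> {1..<t}" "sorted L2" "set L2 \<subseteq> {1..<t}"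
    "ch_eq n (row t L1 m1 @ w) (zs2 @ row t L2 m2)"
    using Cons.IH[OF 1(2,3), of m1] Cons.prems(3) by auto
  have w: "set w \<subseteq> {1..n}"
    using Cons.prems(3) assms(4) by auto
  have zs1: "set zs1 \<subseteq> {1..n}"
    using 1(1) assms(4) by force
  have "row t L m @ y # w = (row t L m @ [y]) @ w"
    by simp
  also have "ch_eq n \<dots> (zs1 @ row t L1 m1 @ w)"
    using ch_eq_append_right[OF 1(4) w] by simp
  also have "ch_eq n \<dots> ((zs1 @ zs2) @ row t L2 m2)"
    using ch_eq_append_left[OF 2(4) zs1] by simp
  finally show ?case
    using 1(1) 2(1-3) by (intro exI[of _ "zs1 @ zs2"] exI[of _ L2] exI[of _ m2]) auto
qed

lemma nf_word_append:
  assumes "nf_data Ls" "set w \<subseteq> {1..t}" "t \<le> n"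
  shows "\<exists>Ls' m'. nf_data Ls' \<and> ch_eq n (nf_word t Ls m @ w) (nf_word t Ls' m')"
  using assms
proof (induction t arbitrary: Ls m w)
  case 0
  then show ?case by (auto intro: ch_eq_refl)
next
  case (Suc t)
  let ?T = "Suc t"
  obtain zs L' m1 where row: "set zs \<subseteq> {1..<?T}" "sorted L'" "set L' \<subseteq> {1..<?T}"
    "ch_eq n (row ?T (Ls ?T) (m ?T) @ w) (zs @ row ?T L' m1)"
    using row_append[of "Ls ?T" ?T w n "m ?T"] Suc.prems by (auto simp: nf_data_def)
  obtain Ls2 m2 where IH: "nf_data Ls2" "ch_eq n (nf_word t Ls m @ zs) (nf_word t Ls2 m2)"
    using Suc.IH[OF Suc.prems(1), of zs m] row(1) Suc.prems(3)
    by (auto simp: atLeastLessThanSuc_atLeastAtMost)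
  have prefix: "set (nf_word t Ls m) \<subseteq> {1..n}" and row_set: "set (row ?T L' m1) \<subseteq> {1..n}"
    using set_nf_word[OF Suc.prems(1), of t m] set_row[OF row(3)] Suc.prems(3) by auto
  have "nf_word ?T Ls m @ w = nf_word t Ls m @ row ?T (Ls ?T) (m ?T) @ w"
    by (simp add: nf_word_Suc)
  also have "ch_eq n \<dots> (nf_word t Ls m @ zs @ row ?T L' m1)"
    using row(4) prefix by (rule ch_eq_append_left)
  also have "ch_eq n \<dots> (nf_word t Ls2 m2 @ row ?T L' m1)"
    using ch_eq_append_right[OF IH(2) row_set] by simp
  also have "\<dots> = nf_word ?T (Ls2(?T := L')) (m2(?T := m1))"
    using nf_word_cong[of t "Ls2(?T := L')" Ls2 "m2(?T := m1)" m2] by (simp add: nf_word_Suc)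
  finally have "ch_eq n (nf_word ?T Ls m @ w) (nf_word ?T (Ls2(?T := L')) (m2(?T := m1)))" .
  moreover have "nf_data (Ls2(?T := L'))"
    using IH(1) row(2,3) by (simp add: nf_data_def)
  ultimately show ?case by blast
qed

lemma ex_nf_word:
  assumes "set w \<subseteq> {1..n}"
  obtains Ls m where "nf_data Ls" "ch_eq n w (nf_word n Ls m)"
proof -
  have "nf_word n (\<lambda>_. []) (\<lambda>_. 0) = []"
    by (simp add: nf_word_def row_def)
  moreover have "nf_data (\<lambda>_. [])"
    by (simp add: nf_data_def)
  ultimately show ?thesis
    using nf_word_append[of "\<lambda>_. []" w n n "\<lambda>_. 0"] assms that by auto
qed

section \<open>The statistics of the 2x2 blocks\<close>

type_synonym stat = "nat \<times> nat \<times> nat"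

fun stat_mult :: "stat \<Rightarrow> stat \<Rightarrow> stat" where
  "stat_mult (a, b, c) (a', b', c') = (a + a', b + b', max (a + c') (c + b'))"

definition letter_stat :: "nat \<Rightarrow> nat \<Rightarrow> nat \<Rightarrow> stat" where
  "letter_stat j k x = (if x \<le> j then (1, 0, 1) else if k \<le> x then (0, 1, 1) else (0, 0, 0))"

(* stat j k w = (a, b, c) as in the header.  On triples with a, b <= c, stat_mult is the product
   of the matrices [[a, c], [-inf, b]], with c read as -inf when it is 0. *)
definition stat :: "nat \<Rightarrow> nat \<Rightarrow> nat list \<Rightarrow> stat" where
  "stat j k w = foldr (\<lambda>x. stat_mult (letter_stat j k x)) w (0, 0, 0)"

definition stat_valid :: "stat \<Rightarrow> bool" where
  "stat_valid s \<longleftrightarrow> (case s of (a, b, c) \<Rightarrow> a \<le> c \<and> b \<le> c)"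

definition count_le :: "nat \<Rightarrow> nat list \<Rightarrow> nat" where
  "count_le j w = length (filter (\<lambda>x. x \<le> j) w)"

lemma stat_Nil [simp]: "stat j k [] = (0, 0, 0)"
  by (simp add: stat_def)

lemma stat_Cons [simp]: "stat j k (x # w) = stat_mult (letter_stat j k x) (stat j k w)"
  by (simp add: stat_def)

lemma stat_mult_assoc: "stat_mult (stat_mult s t) r = stat_mult s (stat_mult t r)"
  by (cases s; cases t; cases r) (simp add: max_add_distrib_left max_add_distrib_right max.assoc add.assoc)

lemma stat_valid_stat: "stat_valid (stat j k w)"
proof (induction w)
  case (Cons x w)
  then show ?case by (cases "stat j k w") (auto simp: stat_valid_def letter_stat_def)
qed (simp add: stat_valid_def)

lemma stat_append: "stat j k (u @ v) = stat_mult (stat j k u) (stat j k v)"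
proof (induction u)
  case Nil
  then show ?case using stat_valid_stat[of j k v] by (cases "stat j k v") (simp add: stat_valid_def)
qed (simp add: stat_mult_assoc)

lemma stat_defining_relations:
  assumes "i \<le> j'" "j' \<le> k'"
  shows "stat j k [j', k', i] = stat j k [k', j', i]" "stat j k [k', j', i] = stat j k [k', i, j']"
  using assms by (auto simp: letter_stat_def)

lemma stat_ch_step:
  assumes "(u, v) \<in> ch_step n"
  shows "stat j k u = stat j k v"
proof -
  obtain x y l r where "u = x @ l @ y" "v = x @ r @ y"
    and "\<exists>i j k. 1 \<le> i \<and> i \<le> j \<and> j \<le> k \<and> k \<le> n \<and>
        ((l = [j,k,i] \<and> r = [k,j,i]) \<or> (l = [k,j,i] \<and> r = [k,i,j]))"
    using assms unfolding ch_step_def by blast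
  moreover from this(3) have "stat j k l = stat j k r"
    using stat_defining_relations by metis
  ultimately show ?thesis by (simp add: stat_append)
qed

lemma stat_ch_eq: "ch_eq n u v \<Longrightarrow> stat j k u = stat j k v"
  unfolding ch_eq_def
proof (induction rule: rtrancl_induct)
  case (step y z)
  then show ?case using stat_ch_step by (metis UnE converseD)
qed simp


lemma count_le_simps [simp]:
  "count_le j [] = 0" "count_le j (x # w) = (if x \<le> j then Suc (count_le j w) else count_le j w)"
  "count_le j (u @ v) = count_le j u + count_le j v"
  by (simp_all add: count_le_def)

lemma fst_stat: "fst (stat j k w) = count_le j w"
proof (induction w)
  case (Cons x w)
  then show ?case by (cases "stat j k w") (simp add: letter_stat_def)
qed simp

lemma stat_without_large_letters:
  assumes "\<forall>x\<in>set w. x < k"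
  shows "stat j k w = (count_le j w, 0, count_le j w)"
  using assms by (induction w) (auto simp: letter_stat_def)

(* c = b on a row t >= k because every letter <= j of the row is preceded by a letter t. *)
lemma stat_row:
  assumes "j < t" "k \<le> t"
  obtains b where "stat j k (row t L m) = (count_le j L, b, b)" "count_le j L \<le> b"
proof -
  define top_led :: "stat \<Rightarrow> bool"
    where "top_led s \<longleftrightarrow> (case s of (a, b, c) \<Rightarrow> c = b \<and> a \<le> b)" for s
  have mult: "top_led (stat_mult s s')" if "top_led s" "top_led s'" for s s'
    using that by (cases s; cases s') (auto simp: top_led_def)
  have "top_led (stat j k (pairs t L))"
  proof (induction L)
    case (Cons s L)
    have "top_led (stat j k [t, s])"
      using assms by (auto simp: top_led_def letter_stat_def)
    with Cons show ?case using mult stat_append[of j k "[t, s]" "pairs t L"] by simp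
  qed (simp add: top_led_def)
  moreover have "top_led (stat j k (replicate m t))"
    using assms by (induction m) (auto simp: top_led_def letter_stat_def)
  ultimately have "top_led (stat j k (row t L m))"
    unfolding row_def stat_append by (rule mult)
  moreover have "count_le j (row t L m) = count_le j L"
    using assms(1) by (induction L) (auto simp: row_def count_le_def)
  ultimately show ?thesis
    using that fst_stat[of j k "row t L m"] by (cases "stat j k (row t L m)") (auto simp: top_led_def)
qed

lemma stat_nf_word:
  assumes "nf_data Ls" "j < k"
  shows "case stat j k (nf_word t Ls m) of (a, b, c) \<Rightarrow> a + b = c + (\<Sum>T = k..t. count_le j (Ls T))"
proof (induction t)
  case 0
  with assms(2) show ?case by simp
next
  case (Suc t)
  show ?case
  proof (cases "Suc t < k")
    case True
    then have "\<forall>x\<in>set (nf_word (Suc t) Ls m). x < k"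
      using set_nf_word[OF assms(1)] by fastforce
    with True show ?thesis by (simp add: stat_without_large_letters)
  next
    case False
    obtain b' where row: "stat j k (row (Suc t) (Ls (Suc t)) (m (Suc t))) = (count_le j (Ls (Suc t)), b', b')"
      "count_le j (Ls (Suc t)) \<le> b'"
      using stat_row[of j "Suc t" k] assms(2) False by auto
    obtain a b c where prefix: "stat j k (nf_word t Ls m) = (a, b, c)"
      by (cases "stat j k (nf_word t Ls m)")
    have "a \<le> c"
      using stat_valid_stat[of j k "nf_word t Ls m"] prefix by (simp add: stat_valid_def)
    with Suc.IH False show ?thesis
      by (simp add: nf_word_Suc stat_append row prefix)
  qed
qed

section \<open>Recovering a normal form from its statistics\<close>

lemma count_le_min:
  assumes "\<forall>x\<in>set w. x \<le> i"
  shows "count_le j w = count_le (min j i) w"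
  unfolding count_le_def using assms by (metis (mono_tags, lifting) filter_cong min.bounded_iff)

lemma count_le_0: "\<forall>x\<in>set w. 1 \<le> x \<Longrightarrow> count_le 0 w = 0"
  by (induction w) auto

lemma mset_eq_if_count_le_eq:
  assumes "\<And>j. count_le j xs = count_le j ys"
  shows "mset xs = mset ys"
proof (rule multiset_eqI)
  have count_le_Suc: "count_le (Suc r) w = count (mset w) (Suc r) + count_le r w" for r w
    by (induction w) auto
  have "count_le 0 w = count (mset w) 0" for w
    by (induction w) auto
  then show "count (mset xs) r = count (mset ys) r" for r
    using assms count_le_Suc by (cases r) (metis, metis add_right_cancel)
qed

lemma sorted_eq_if_count_le_eq:
  assumes "sorted xs" "sorted ys" "\<And>j. count_le j xs = count_le j ys"
  shows "xs = ys"
  using mset_eq_if_count_le_eq[OF assms(3)] assms(1,2) by (metis properties_for_sort sorted_sort_id)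

lemma nf_row_sums_eq_if_stat_eq:
  assumes Ls: "nf_data Ls" "nf_data Ls'"
    and stat: "\<And>j k. 1 \<le> j \<Longrightarrow> j \<le> k \<Longrightarrow> k \<le> n \<Longrightarrow>
      stat j k (nf_word n Ls m) = stat j k (nf_word n Ls' m')"
    and "j < k"
  shows "(\<Sum>T = k..n. count_le j (Ls T)) = (\<Sum>T = k..n. count_le j (Ls' T))"
proof -
  consider "1 \<le> j" "k \<le> n" | "n < k" | "j = 0"
    by linarith
  then show ?thesis
  proof cases
    case 1
    then show ?thesis
      using stat_nf_word[OF Ls(1) \<open>j < k\<close>, of n m] stat_nf_word[OF Ls(2) \<open>j < k\<close>, of n m']
        stat[of j k] \<open>j < k\<close> by (auto split: prod.splits)
  next
    case 3
    with Ls show ?thesis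
      by (simp add: count_le_0 nf_data_def subset_iff)
  qed simp
qed

lemma nf_rows_eq_if_stat_eq:
  assumes Ls: "nf_data Ls" "nf_data Ls'"
    and stat: "\<And>j k. 1 \<le> j \<Longrightarrow> j \<le> k \<Longrightarrow> k \<le> n \<Longrightarrow>
      stat j k (nf_word n Ls m) = stat j k (nf_word n Ls' m')"
    and k: "1 \<le> k" "k \<le> n"
  shows "Ls k = Ls' k"
proof -
  have row_count: "count_le j (Ls k) = count_le j (Ls' k)" if "j < k" for j
  proof -
    have "(\<Sum>T = k..n. count_le j (Ls T)) = count_le j (Ls k) + (\<Sum>T = Suc k..n. count_le j (Ls T))"
      for Ls using k(2) by (simp add: sum.atLeast_Suc_atMost)
    then show ?thesis
      using nf_row_sums_eq_if_stat_eq[OF Ls stat, of j k] nf_row_sums_eq_if_stat_eq[OF Ls stat, of j "Suc k"] that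
      by simp
  qed
  have range: "sorted (Ls k)" "sorted (Ls' k)" "set (Ls k) \<subseteq> {1..<k}" "set (Ls' k) \<subseteq> {1..<k}"
    using Ls by (auto simp: nf_data_def)
  have "count_le j (Ls k) = count_le j (Ls' k)" for j
  proof -
    have "\<forall>x\<in>set (Ls k). x \<le> k - 1" "\<forall>x\<in>set (Ls' k). x \<le> k - 1"
      using range by fastforce+
    then have "count_le j (Ls k) = count_le (min j (k - 1)) (Ls k)"
      "count_le j (Ls' k) = count_le (min j (k - 1)) (Ls' k)"
      by (auto intro: count_le_min)
    moreover have "min j (k - 1) < k"
      using k(1) by auto
    ultimately show ?thesis
      using row_count by simp
  qed
  with range show ?thesis by (intro sorted_eq_if_count_le_eq)
qed

lemma count_nf_word:
  "1 \<le> r \<Longrightarrow>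
    count (mset (nf_word t Ls m)) r = (if r \<le> t then m r else 0) + count (mset (nf_word t Ls (\<lambda>_. 0))) r"
  by (induction t) (auto simp: nf_word_Suc row_def)

lemma nf_word_eq_if_stat_eq:
  assumes Ls: "nf_data Ls" "nf_data Ls'"
    and stat: "\<And>j k. 1 \<le> j \<Longrightarrow> j \<le> k \<Longrightarrow> k \<le> n \<Longrightarrow>
      stat j k (nf_word n Ls m) = stat j k (nf_word n Ls' m')"
  shows "nf_word n Ls m = nf_word n Ls' m'"
proof -
  have rows: "Ls k = Ls' k" if "1 \<le> k" "k \<le> n" for k
    using nf_rows_eq_if_stat_eq[OF Ls stat] that by blast
  have letters: "\<forall>x\<in>set (nf_word n Ls m). 1 \<le> x \<and> x \<le> n"
    "\<forall>x\<in>set (nf_word n Ls' m'). 1 \<le> x \<and> x \<le> n"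
    using set_nf_word[OF Ls(1)] set_nf_word[OF Ls(2)] by fastforce+
  have "count_le j (nf_word n Ls m) = count_le j (nf_word n Ls' m')" for j
  proof -
    have cap: "count_le j (nf_word n Ls m) = count_le (min j n) (nf_word n Ls m)"
      "count_le j (nf_word n Ls' m') = count_le (min j n) (nf_word n Ls' m')"
      using letters by (auto intro: count_le_min)
    show ?thesis
    proof (cases "min j n = 0")
      case True
      with letters show ?thesis unfolding cap by (simp add: count_le_0)
    next
      case False
      then have "stat (min j n) (min j n) (nf_word n Ls m) = stat (min j n) (min j n) (nf_word n Ls' m')"
        by (intro stat) auto
      then show ?thesis unfolding cap by (metis fst_stat)
    qed
  qed
  then have "mset (nf_word n Ls m) = mset (nf_word n Ls' m')"
    by (rule mset_eq_if_count_le_eq)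
  moreover have "nf_word n Ls (\<lambda>_. 0) = nf_word n Ls' (\<lambda>_. 0)"
    using rows by (intro nf_word_cong) simp
  ultimately have "m r = m' r" if "1 \<le> r" "r \<le> n" for r
    using count_nf_word[of r n Ls m] count_nf_word[of r n Ls' m'] that by simp
  with rows show ?thesis by (intro nf_word_cong) simp
qed

section \<open>Block-diagonal tropical matrices\<close>

lemma tadd_NegInf_right [simp]: "tadd a NegInf = a"
  by (cases a) auto

lemma tmul_NegInf_right [simp]: "tmul a NegInf = NegInf"
  by (cases a) auto

lemma tadd_commute: "tadd a b = tadd b a"
  by (cases a; cases b) (auto simp: max.commute)

lemma tadd_assoc: "tadd (tadd a b) c = tadd a (tadd b c)"
  by (cases a; cases b; cases c) (auto simp: max.assoc)

lemma foldr_tadd: "foldr (\<lambda>k. tadd (f k)) xs a = tadd (foldr (\<lambda>k. tadd (f k)) xs NegInf) a"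
  by (induction xs) (auto simp: tadd_assoc)

lemma tsum_0 [simp]: "tsum f 0 = NegInf"
  by (simp add: tsum_def)

lemma tsum_Suc: "tsum f (Suc N) = tadd (tsum f N) (f N)"
  unfolding tsum_def by (simp, subst foldr_tadd, simp)

lemma tsum_NegInf: "(\<And>k. f k = NegInf) \<Longrightarrow> tsum f N = NegInf"
  by (induction N) (simp_all add: tsum_Suc)

lemma tsum_two_terms:
  assumes "\<And>k. k \<noteq> p \<Longrightarrow> k \<noteq> Suc p \<Longrightarrow> f k = NegInf" "Suc p < N"
  shows "tsum f N = tadd (f p) (f (Suc p))"
proof -
  have "tsum f N = (if N \<le> p then NegInf else if N = Suc p then f p else tadd (f p) (f (Suc p)))" for N
    by (induction N) (use assms(1) in \<open>auto simp: tsum_Suc tadd_commute\<close>)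
  with assms(2) show ?thesis by simp
qed

definition block_diag :: "nat \<Rightarrow> (nat \<Rightarrow> nat \<Rightarrow> nat \<Rightarrow> trop) \<Rightarrow> tmat" where
  "block_diag N B = (\<lambda>i l. if i < N \<and> l < N \<and> i div 2 = l div 2 then B (i div 2) (i mod 2) (l mod 2) else NegInf)"

lemma block_diag_cong:
  assumes "\<And>b p q. 2 * b < N \<Longrightarrow> p < 2 \<Longrightarrow> q < 2 \<Longrightarrow> B b p q = C b p q"
  shows "block_diag N B = block_diag N C"
  unfolding block_diag_def using assms by (intro ext) auto

lemma block_diag_entry:
  assumes "2 * b + 1 < N" "p < 2" "q < 2"
  shows "block_diag N B (2 * b + p) (2 * b + q) = B b p q"
  using assms by (simp add: block_diag_def)

lemma tmat_one_block_diag: "tmat_one N = block_diag N (\<lambda>b p q. if p = q then Fin 0 else NegInf)"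
proof (intro ext)
  fix i l :: nat
  have "i = l \<longleftrightarrow> i div 2 = l div 2 \<and> i mod 2 = l mod 2"
    by (metis div_mod_decomp)
  then show "tmat_one N i l = block_diag N (\<lambda>b p q. if p = q then Fin 0 else NegInf) i l"
    by (auto simp: tmat_one_def block_diag_def)
qed

lemma tmat_mult_block_diag:
  assumes "even N"
  shows "tmat_mult N (block_diag N B) (block_diag N C) =
    block_diag N (\<lambda>b p q. tadd (tmul (B b p 0) (C b 0 q)) (tmul (B b p 1) (C b 1 q)))"
proof (intro ext)
  fix i l :: nat
  show "tmat_mult N (block_diag N B) (block_diag N C) i l =
    block_diag N (\<lambda>b p q. tadd (tmul (B b p 0) (C b 0 q)) (tmul (B b p 1) (C b 1 q))) i l"
  proof (cases "i < N")
    case False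
    then show ?thesis by (simp add: tmat_mult_def block_diag_def tsum_NegInf)
  next
    case True
    define p where "p = 2 * (i div 2)"
    have p: "p div 2 = i div 2" "Suc p div 2 = i div 2" "p mod 2 = 0" "Suc p mod 2 = 1"
      unfolding p_def by auto
    have "Suc p < N"
      using assms True unfolding p_def by presburger
    moreover have "tmul (block_diag N B i k) (block_diag N C k l) = NegInf" if "k \<noteq> p" "k \<noteq> Suc p" for k
    proof -
      have "k div 2 \<noteq> i div 2"
        using that unfolding p_def by presburger
      then show ?thesis by (simp add: block_diag_def)
    qed
    ultimately have "tmat_mult N (block_diag N B) (block_diag N C) i l =
      tadd (tmul (block_diag N B i p) (block_diag N C p l)) (tmul (block_diag N B i (Suc p)) (block_diag N C (Suc p) l))"
      unfolding tmat_mult_def by (intro tsum_two_terms)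
    with p True \<open>Suc p < N\<close> show ?thesis by (auto simp: block_diag_def)
  qed
qed

lemma block2_upper_block_diag:
  assumes "\<And>b. B b 1 0 = NegInf"
  shows "block2_upper N (block_diag N B)"
  unfolding block2_upper_def upper_tri_def tmats_def
proof (intro conjI allI impI CollectI)
  fix i l :: nat
  show "block_diag N B i l = NegInf" if "N \<le> i \<or> N \<le> l"
    using that by (auto simp: block_diag_def)
  show "block_diag N B i l = NegInf" if "l < i"
  proof (cases "i div 2 = l div 2")
    case True
    with that have "i mod 2 = 1" "l mod 2 = 0"
      by presburger+
    with assms show ?thesis by (simp add: block_diag_def)
  qed (simp add: block_diag_def)
  show "i = l \<or> even i \<and> l = i + 1" if "block_diag N B i l \<noteq> NegInf"
  proof -
    from that have "i div 2 = l div 2"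
      by (auto simp: block_diag_def split: if_splits)
    moreover have "\<not> (i mod 2 = 1 \<and> l mod 2 = 0)"
    proof
      assume "i mod 2 = 1 \<and> l mod 2 = 0"
      then have "block_diag N B i l = NegInf"
        using assms by (simp add: block_diag_def)
      with that show False ..
    qed
    ultimately show ?thesis by presburger
  qed
qed

section \<open>The representation\<close>

(* The corner is -inf exactly when c = 0, i.e. when w has no letter <= j and none >= k;
   such words, in particular the empty word, must act as the identity. *)
definition stat_block :: "stat \<Rightarrow> nat \<Rightarrow> nat \<Rightarrow> trop" where
  "stat_block s p q = (case s of (a, b, c) \<Rightarrow>
     if p = 0 \<and> q = 0 then Fin (real a) else if p = 1 \<and> q = 1 then Fin (real b)
     else if p = 0 \<and> q = 1 \<and> c \<noteq> 0 then Fin (real c) else NegInf)"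

lemma stat_block_mult:
  assumes "stat_valid s" "stat_valid t" "p < 2" "q < 2"
  shows "stat_block (stat_mult s t) p q =
    tadd (tmul (stat_block s p 0) (stat_block t 0 q)) (tmul (stat_block s p 1) (stat_block t 1 q))"
proof -
  obtain a b c a' b' c' where st: "s = (a, b, c)" "t = (a', b', c')"
    by (cases s; cases t) auto
  with assms(1,2) have "a \<le> c" "b \<le> c" "a' \<le> c'" "b' \<le> c'"
    by (auto simp: stat_valid_def)
  moreover have "p = 0 \<or> p = 1" "q = 0 \<or> q = 1"
    using assms(3,4) by auto
  ultimately show ?thesis
    unfolding st by (auto simp: stat_block_def max_def)
qed

lemma stat_block_inj:
  assumes "\<And>p q. p < 2 \<Longrightarrow> q < 2 \<Longrightarrow> stat_block s p q = stat_block t p q"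
  shows "s = t"
proof -
  obtain a b c a' b' c' where st: "s = (a, b, c)" "t = (a', b', c')"
    by (cases s; cases t) auto
  from assms[of 0 0] assms[of 1 1] assms[of 0 1] show ?thesis
    unfolding st stat_block_def by (auto split: if_splits)
qed

definition index_pairs :: "nat \<Rightarrow> (nat \<times> nat) list" where
  "index_pairs n = [(j, k). k \<leftarrow> [1..<Suc n], j \<leftarrow> [1..<Suc k]]"

lemma length_index_pairs: "2 * length (index_pairs n) = n * (n + 1)"
  by (induction n) (auto simp: index_pairs_def length_concat comp_def)

lemma set_index_pairs: "set (index_pairs n) = {(j, k). 1 \<le> j \<and> j \<le> k \<and> k \<le> n}"
  by (auto simp: index_pairs_def image_iff)

definition ch_rep :: "nat \<Rightarrow> nat list \<Rightarrow> tmat" where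
  "ch_rep n w = block_diag (n * (n + 1)) (\<lambda>b. case index_pairs n ! b of (j, k) \<Rightarrow> stat_block (stat j k w))"

lemma ch_rep_Nil: "ch_rep n [] = tmat_one (n * (n + 1))"
  unfolding ch_rep_def tmat_one_block_diag
  by (rule block_diag_cong) (auto simp: stat_block_def split: prod.splits)

lemma ch_rep_append: "ch_rep n (u @ v) = tmat_mult (n * (n + 1)) (ch_rep n u) (ch_rep n v)"
  unfolding ch_rep_def
  by (subst tmat_mult_block_diag, simp, rule block_diag_cong)
    (auto simp: stat_append stat_block_mult stat_valid_stat split: prod.splits)

lemma ch_rep_block2_upper: "block2_upper (n * (n + 1)) (ch_rep n w)"
  unfolding ch_rep_def by (rule block2_upper_block_diag) (simp add: stat_block_def split: prod.splits)

lemma ch_rep_ch_eq: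
  assumes "ch_eq n u v"
  shows "ch_rep n u = ch_rep n v"
proof -
  have "stat j k u = stat j k v" for j k
    using assms by (rule stat_ch_eq)
  then show ?thesis by (simp add: ch_rep_def)
qed

lemma stat_eq_if_ch_rep_eq:
  assumes "ch_rep n u = ch_rep n v" "1 \<le> j" "j \<le> k" "k \<le> n"
  shows "stat j k u = stat j k v"
proof (rule stat_block_inj)
  have "(j, k) \<in> set (index_pairs n)"
    using assms(2-4) by (simp add: set_index_pairs)
  then obtain b where b: "b < length (index_pairs n)" "index_pairs n ! b = (j, k)"
    by (auto simp: in_set_conv_nth)
  then have "2 * b + 1 < n * (n + 1)"
    using length_index_pairs[of n] by linarith
  then have entry: "ch_rep n w (2 * b + p) (2 * b + q) = stat_block (stat j k w) p q"
    if "p < 2" "q < 2" for w p q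
    unfolding ch_rep_def using block_diag_entry that b(2) by simp
  show "stat_block (stat j k u) p q = stat_block (stat j k v) p q" if "p < 2" "q < 2" for p q
    using entry[OF that, of u] entry[OF that, of v] assms(1) by simp
qed

lemma ch_rep_inj:
  assumes "set u \<subseteq> {1..n}" "set v \<subseteq> {1..n}" "ch_rep n u = ch_rep n v"
  shows "ch_eq n u v"
proof -
  obtain Ls m where u: "nf_data Ls" "ch_eq n u (nf_word n Ls m)"
    using ex_nf_word[OF assms(1)] .
  obtain Ls' m' where v: "nf_data Ls'" "ch_eq n v (nf_word n Ls' m')"
    using ex_nf_word[OF assms(2)] .
  have "stat j k (nf_word n Ls m) = stat j k (nf_word n Ls' m')" if "1 \<le> j" "j \<le> k" "k \<le> n" for j k
    using stat_eq_if_ch_rep_eq[OF assms(3) that] stat_ch_eq[OF u(2)] stat_ch_eq[OF v(2)] by simp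
  then have "nf_word n Ls m = nf_word n Ls' m'"
    by (rule nf_word_eq_if_stat_eq[OF u(1) v(1)])
  with u(2) v(2) show ?thesis
    by (metis ch_eq_sym ch_eq_trans)
qed

theorem theoremI:
  fixes n :: nat
  assumes "n \<ge> 1"
  shows "\<exists>\<rho> :: nat list \<Rightarrow> tmat.
     \<rho> [] = tmat_one (n * (n + 1)) \<and>
     (\<forall>u \<in> ch_words n. \<forall>v \<in> ch_words n.
        \<rho> (u @ v) = tmat_mult (n * (n + 1)) (\<rho> u) (\<rho> v)) \<and>
     (\<forall>u \<in> ch_words n. \<forall>v \<in> ch_words n. ch_eq n u v \<longrightarrow> \<rho> u = \<rho> v) \<and>
     (\<forall>u \<in> ch_words n. \<forall>v \<in> ch_words n. \<rho> u = \<rho> v \<longrightarrow> ch_eq n u v) \<and>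
     (\<forall>u \<in> ch_words n. block2_upper (n * (n + 1)) (\<rho> u))"
proof (intro exI[of _ "ch_rep n"] conjI ballI impI)
  (* the construction does not need n \<ge> 1 *)
  fix u v
  show "ch_rep n [] = tmat_one (n * (n + 1))"
    by (rule ch_rep_Nil)
  show "ch_rep n (u @ v) = tmat_mult (n * (n + 1)) (ch_rep n u) (ch_rep n v)"
    by (rule ch_rep_append)
  show "ch_eq n u v \<Longrightarrow> ch_rep n u = ch_rep n v"
    by (rule ch_rep_ch_eq)
  show "u \<in> ch_words n \<Longrightarrow> v \<in> ch_words n \<Longrightarrow> ch_rep n u = ch_rep n v \<Longrightarrow> ch_eq n u v"
    unfolding ch_words_def by (rule ch_rep_inj) simp_all
  show "block2_upper (n * (n + 1)) (ch_rep n u)"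
    by (rule ch_rep_block2_upper)
qed

end
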